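(* The functor $A\mapsto A_{halo}$ induces an equivalence of categories between the category of idempotent semirings whose natural order is total (with semiring morphisms) and the category of tropical halos with multiplicative halo morphisms.
   Context: Semirings are commutative and unital. A halo is a semiring with a partial order compatible with its operations ($x\le z,y\le t\Rightarrow xy\le zt,\ x+y\le z+t$); a halo morphism is an increasing map $f$ with $f(0)=0$, $f(1)=1$, $f(a+b)\le f(a)+f(b)$, $f(ab)\le f(a)f(b)$; it is multiplicative if $f(ab)=f(a)f(b)$. A semiring is idempotent if $a+a=a$ for all $a$; its natural order is $a\le b\iff a+b=b$, and $A_{halo}$ denotes $A$ with this order. A halo is tropical if it is not $\{0\}$, its order is total, and $a+b=\max(a,b)$ for all $a,b$. *)

theory Defs
  imports Main
begin

record 'a semiring_str =
  carrier :: "'a set"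
  sadd :: "'a \<Rightarrow> 'a \<Rightarrow> 'a"
  smul :: "'a \<Rightarrow> 'a \<Rightarrow> 'a"
  szero :: 'a
  sone :: 'a

record 'a halo_str = "'a semiring_str" +
  hle :: "'a \<Rightarrow> 'a \<Rightarrow> bool"

definition is_comm_semiring :: "('a, 'b) semiring_str_scheme \<Rightarrow> bool" where
  "is_comm_semiring R \<longleftrightarrow>
     szero R \<in> carrier R \<and> sone R \<in> carrier R \<and>
     (\<forall>a\<in>carrier R. \<forall>b\<in>carrier R. sadd R a b \<in> carrier R \<and> smul R a b \<in> carrier R) \<and>
     (\<forall>a\<in>carrier R. \<forall>b\<in>carrier R. \<forall>c\<in>carrier R.
        sadd R (sadd R a b) c = sadd R a (sadd R b c) \<and>
        smul R (smul R a b) c = smul R a (smul R b c) \<and>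
        smul R a (sadd R b c) = sadd R (smul R a b) (smul R a c)) \<and>
     (\<forall>a\<in>carrier R. \<forall>b\<in>carrier R. sadd R a b = sadd R b a \<and> smul R a b = smul R b a) \<and>
     (\<forall>a\<in>carrier R. sadd R (szero R) a = a \<and> smul R (sone R) a = a \<and> smul R (szero R) a = szero R)"

definition idempotent_semiring :: "('a, 'b) semiring_str_scheme \<Rightarrow> bool" where
  "idempotent_semiring R \<longleftrightarrow> is_comm_semiring R \<and> (\<forall>a\<in>carrier R. sadd R a a = a)"

definition nat_le :: "('a, 'b) semiring_str_scheme \<Rightarrow> 'a \<Rightarrow> 'a \<Rightarrow> bool" where
  "nat_le R a b \<longleftrightarrow> sadd R a b = b"

definition idem_total_semiring :: "'a semiring_str \<Rightarrow> bool" where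
  "idem_total_semiring R \<longleftrightarrow> idempotent_semiring R \<and> carrier R \<noteq> {szero R} \<and>
     (\<forall>a\<in>carrier R. \<forall>b\<in>carrier R. nat_le R a b \<or> nat_le R b a)"

definition to_halo :: "'a semiring_str \<Rightarrow> 'a halo_str" where
  "to_halo R = \<lparr>carrier = carrier R, sadd = sadd R, smul = smul R, szero = szero R,
                sone = sone R, hle = nat_le R\<rparr>"

definition is_halo :: "'a halo_str \<Rightarrow> bool" where
  "is_halo H \<longleftrightarrow> is_comm_semiring H \<and>
     (\<forall>a\<in>carrier H. hle H a a) \<and>
     (\<forall>a\<in>carrier H. \<forall>b\<in>carrier H. hle H a b \<and> hle H b a \<longrightarrow> a = b) \<and>
     (\<forall>a\<in>carrier H. \<forall>b\<in>carrier H. \<forall>c\<in>carrier H. hle H a b \<and> hle H b c \<longrightarrow> hle H a c) \<and>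
     (\<forall>x\<in>carrier H. \<forall>y\<in>carrier H. \<forall>z\<in>carrier H. \<forall>t\<in>carrier H.
        hle H x z \<and> hle H y t \<longrightarrow> hle H (smul H x y) (smul H z t) \<and> hle H (sadd H x y) (sadd H z t))"

definition tropical_halo :: "'a halo_str \<Rightarrow> bool" where
  "tropical_halo H \<longleftrightarrow> is_halo H \<and> carrier H \<noteq> {szero H} \<and>
     (\<forall>a\<in>carrier H. \<forall>b\<in>carrier H. hle H a b \<or> hle H b a) \<and>
     (\<forall>a\<in>carrier H. \<forall>b\<in>carrier H. sadd H a b = (if hle H a b then b else a))"

definition semiring_hom :: "'a semiring_str \<Rightarrow> 'b semiring_str \<Rightarrow> ('a \<Rightarrow> 'b) \<Rightarrow> bool" where
  "semiring_hom R S f \<longleftrightarrow> (\<forall>a\<in>carrier R. f a \<in> carrier S) \<and>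
     f (szero R) = szero S \<and> f (sone R) = sone S \<and>
     (\<forall>a\<in>carrier R. \<forall>b\<in>carrier R. f (sadd R a b) = sadd S (f a) (f b) \<and>
                                    f (smul R a b) = smul S (f a) (f b))"

definition halo_hom :: "'a halo_str \<Rightarrow> 'b halo_str \<Rightarrow> ('a \<Rightarrow> 'b) \<Rightarrow> bool" where
  "halo_hom H K f \<longleftrightarrow> (\<forall>a\<in>carrier H. f a \<in> carrier K) \<and>
     (\<forall>a\<in>carrier H. \<forall>b\<in>carrier H. hle H a b \<longrightarrow> hle K (f a) (f b)) \<and>
     f (szero H) = szero K \<and> f (sone H) = sone K \<and>
     (\<forall>a\<in>carrier H. \<forall>b\<in>carrier H. hle K (f (sadd H a b)) (sadd K (f a) (f b)) \<and>
                                    hle K (f (smul H a b)) (smul K (f a) (f b)))"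

definition mult_halo_hom :: "'a halo_str \<Rightarrow> 'b halo_str \<Rightarrow> ('a \<Rightarrow> 'b) \<Rightarrow> bool" where
  "mult_halo_hom H K f \<longleftrightarrow> halo_hom H K f \<and>
     (\<forall>a\<in>carrier H. \<forall>b\<in>carrier H. f (smul H a b) = smul K (f a) (f b))"

end

theory Submission
  imports Defs
begin

text \<open>The natural order of an idempotent semiring is a partial order in which \<open>a + b\<close> is the
least upper bound of \<open>a\<close> and \<open>b\<close>, and multiplication distributes over these joins; this makes
\<open>A\<^sub>h\<^sub>a\<^sub>l\<^sub>o\<close> a halo, tropical when the order is total. Conversely, in a tropical halo
\<open>a + b = b\<close> holds exactly when \<open>a \<le> b\<close>, so the halo is recovered from its underlying semiring.
On morphisms, a multiplicative halo morphism \<open>f\<close> satisfies \<open>f a, f b \<le> f (a + b)\<close> by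
monotonicity, hence \<open>f a + f b \<le> f (a + b)\<close>, which together with subadditivity makes \<open>f\<close>
additive.\<close>

lemma to_halo_simps [simp]:
  "carrier (to_halo R) = carrier R" "sadd (to_halo R) = sadd R" "smul (to_halo R) = smul R"
  "szero (to_halo R) = szero R" "sone (to_halo R) = sone R" "hle (to_halo R) = nat_le R"
  by (simp_all add: to_halo_def)

locale idem_semiring =
  fixes R :: "('a, 'b) semiring_str_scheme"
  assumes idempotent: "idempotent_semiring R"
begin

abbreviation add (infixl "\<oplus>" 65) where "a \<oplus> b \<equiv> sadd R a b"
abbreviation mul (infixl "\<otimes>" 70) where "a \<otimes> b \<equiv> smul R a b"
abbreviation le (infix "\<preceq>" 50) where "a \<preceq> b \<equiv> nat_le R a b"

lemma comm_semiring: "is_comm_semiring R"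
  using idempotent by (simp add: idempotent_semiring_def)

lemma add_idem: "a \<in> carrier R \<Longrightarrow> a \<oplus> a = a"
  using idempotent by (simp add: idempotent_semiring_def)

lemma add_closed: "a \<in> carrier R \<Longrightarrow> b \<in> carrier R \<Longrightarrow> a \<oplus> b \<in> carrier R"
  and add_assoc: "a \<in> carrier R \<Longrightarrow> b \<in> carrier R \<Longrightarrow> c \<in> carrier R \<Longrightarrow> a \<oplus> b \<oplus> c = a \<oplus> (b \<oplus> c)"
  and add_comm: "a \<in> carrier R \<Longrightarrow> b \<in> carrier R \<Longrightarrow> a \<oplus> b = b \<oplus> a"
  and mul_closed: "a \<in> carrier R \<Longrightarrow> b \<in> carrier R \<Longrightarrow> a \<otimes> b \<in> carrier R"
  and mul_comm: "a \<in> carrier R \<Longrightarrow> b \<in> carrier R \<Longrightarrow> a \<otimes> b = b \<otimes> a"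
  and distrib: "a \<in> carrier R \<Longrightarrow> b \<in> carrier R \<Longrightarrow> c \<in> carrier R \<Longrightarrow> a \<otimes> (b \<oplus> c) = a \<otimes> b \<oplus> a \<otimes> c"
  using comm_semiring unfolding is_comm_semiring_def by blast+

lemma le_refl: "a \<in> carrier R \<Longrightarrow> a \<preceq> a"
  by (simp add: nat_le_def add_idem)

lemma le_antisym: "a \<in> carrier R \<Longrightarrow> b \<in> carrier R \<Longrightarrow> a \<preceq> b \<Longrightarrow> b \<preceq> a \<Longrightarrow> a = b"
  by (metis nat_le_def add_comm)

lemma le_trans: "a \<in> carrier R \<Longrightarrow> b \<in> carrier R \<Longrightarrow> c \<in> carrier R \<Longrightarrow> a \<preceq> b \<Longrightarrow> b \<preceq> c \<Longrightarrow> a \<preceq> c"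
  by (metis nat_le_def add_assoc)

lemma le_add1: "a \<in> carrier R \<Longrightarrow> b \<in> carrier R \<Longrightarrow> a \<preceq> a \<oplus> b"
  by (simp add: nat_le_def add_assoc [symmetric] add_idem)

lemma le_add2: "a \<in> carrier R \<Longrightarrow> b \<in> carrier R \<Longrightarrow> b \<preceq> a \<oplus> b"
  by (metis add_comm le_add1)

lemma add_least:
  assumes "a \<in> carrier R" "b \<in> carrier R" "c \<in> carrier R" "a \<preceq> c" "b \<preceq> c"
  shows "a \<oplus> b \<preceq> c"
  using assms by (simp add: nat_le_def add_assoc)

lemma add_mono:
  assumes "x \<in> carrier R" "y \<in> carrier R" "z \<in> carrier R" "t \<in> carrier R" "x \<preceq> z" "y \<preceq> t"
  shows "x \<oplus> y \<preceq> z \<oplus> t"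
  using assms by (meson add_closed add_least le_add1 le_add2 le_trans)

lemma mul_mono_right:
  assumes "a \<in> carrier R" "x \<in> carrier R" "z \<in> carrier R" "x \<preceq> z"
  shows "a \<otimes> x \<preceq> a \<otimes> z"
proof -
  have "a \<otimes> z = a \<otimes> (x \<oplus> z)" using \<open>x \<preceq> z\<close> by (simp add: nat_le_def)
  then show ?thesis using assms by (simp add: nat_le_def distrib)
qed

lemma mul_mono:
  assumes "x \<in> carrier R" "y \<in> carrier R" "z \<in> carrier R" "t \<in> carrier R" "x \<preceq> z" "y \<preceq> t"
  shows "x \<otimes> y \<preceq> z \<otimes> t"
proof -
  have "x \<otimes> y \<preceq> x \<otimes> t" using assms by (simp add: mul_mono_right)
  moreover have "x \<otimes> t \<preceq> z \<otimes> t" using assms by (metis mul_comm mul_mono_right)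
  ultimately show ?thesis using assms by (meson le_trans mul_closed)
qed

end

lemma is_halo_to_halo:
  fixes R :: "'a semiring_str"
  assumes "idempotent_semiring R"
  shows "is_halo (to_halo R)"
proof -
  interpret idem_semiring R using assms by (rule idem_semiring.intro)
  have "is_comm_semiring (to_halo R)"
    using comm_semiring unfolding is_comm_semiring_def to_halo_simps .
  then show ?thesis
    unfolding is_halo_def to_halo_simps
    by (intro conjI ballI impI; (elim conjE)?)
       (assumption | erule le_refl le_antisym le_trans add_mono mul_mono; assumption)+
qed

lemma idem_semiring_hom_iff_mult_halo_hom:
  fixes R :: "'a semiring_str" and S :: "'b semiring_str"
  assumes "idempotent_semiring R" "idempotent_semiring S"
  shows "semiring_hom R S f \<longleftrightarrow> mult_halo_hom (to_halo R) (to_halo S) f"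
proof -
  interpret R: idem_semiring R using assms(1) by (rule idem_semiring.intro)
  interpret S: idem_semiring S using assms(2) by (rule idem_semiring.intro)
  show ?thesis
  proof
    assume hom: "semiring_hom R S f"
    then have "nat_le S (f a) (f b)" if "a \<in> carrier R" "b \<in> carrier R" "nat_le R a b" for a b
      using that unfolding semiring_hom_def nat_le_def by metis
    then show "mult_halo_hom (to_halo R) (to_halo S) f"
      using hom
      unfolding mult_halo_hom_def halo_hom_def semiring_hom_def to_halo_simps
      by (simp add: S.le_refl S.add_closed S.mul_closed)
  next
    assume hom: "mult_halo_hom (to_halo R) (to_halo S) f"
    then have closed: "\<And>a. a \<in> carrier R \<Longrightarrow> f a \<in> carrier S"
      and mono: "\<And>a b. a \<in> carrier R \<Longrightarrow> b \<in> carrier R \<Longrightarrow> nat_le R a b \<Longrightarrow> nat_le S (f a) (f b)"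
      and subadd: "\<And>a b. a \<in> carrier R \<Longrightarrow> b \<in> carrier R \<Longrightarrow> nat_le S (f (sadd R a b)) (sadd S (f a) (f b))"
      unfolding mult_halo_hom_def halo_hom_def by auto
    have "f (sadd R a b) = sadd S (f a) (f b)" if ab: "a \<in> carrier R" "b \<in> carrier R" for a b
    proof (rule S.le_antisym)
      have "nat_le S (f a) (f (sadd R a b))" "nat_le S (f b) (f (sadd R a b))"
        using ab by (simp_all add: mono R.add_closed R.le_add1 R.le_add2)
      then show "nat_le S (sadd S (f a) (f b)) (f (sadd R a b))"
        using ab by (simp add: S.add_least closed R.add_closed)
    qed (use ab in \<open>simp_all add: subadd closed R.add_closed S.add_closed\<close>)
    then show "semiring_hom R S f"
      using hom unfolding semiring_hom_def mult_halo_hom_def halo_hom_def by simp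
  qed
qed

lemma tropical_halo_to_halo:
  assumes "idem_total_semiring R"
  shows "tropical_halo (to_halo R)"
proof -
  have idem: "idempotent_semiring R" and nontrivial: "carrier R \<noteq> {szero R}"
    and total: "\<forall>a\<in>carrier R. \<forall>b\<in>carrier R. nat_le R a b \<or> nat_le R b a"
    using assms unfolding idem_total_semiring_def by blast+
  interpret idem_semiring R using idem by (rule idem_semiring.intro)
  have "\<forall>a\<in>carrier R. \<forall>b\<in>carrier R. sadd R a b = (if nat_le R a b then b else a)"
    using total by (metis nat_le_def add_comm)
  then show ?thesis
    using nontrivial total is_halo_to_halo [OF idem]
    unfolding tropical_halo_def to_halo_simps by blast
qed

lemma tropical_halo_nat_le_iff:
  assumes "tropical_halo H" "a \<in> carrier H" "b \<in> carrier H"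
  shows "nat_le H a b \<longleftrightarrow> hle H a b"
proof -
  have "hle H a a" and "sadd H a b = (if hle H a b then b else a)"
    using assms unfolding tropical_halo_def is_halo_def by blast+
  \<comment> \<open>if \<open>a \<le> b\<close> fails, then \<open>a + b = a\<close>, so \<open>a + b = b\<close> would force \<open>a = b\<close>\<close>
  then show ?thesis
    unfolding nat_le_def by metis
qed

lemma truncate_simps [simp]:
  "carrier (semiring_str.truncate H) = carrier H" "sadd (semiring_str.truncate H) = sadd H"
  "smul (semiring_str.truncate H) = smul H" "szero (semiring_str.truncate H) = szero H"
  "sone (semiring_str.truncate H) = sone H" "nat_le (semiring_str.truncate H) = nat_le H"
  by (simp_all add: semiring_str.truncate_def nat_le_def [abs_def])

lemma idem_total_semiring_truncate:
  assumes "tropical_halo H"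
  shows "idem_total_semiring (semiring_str.truncate H)"
proof -
  have halo: "is_halo H" and nontrivial: "carrier H \<noteq> {szero H}"
    and total: "\<forall>a\<in>carrier H. \<forall>b\<in>carrier H. hle H a b \<or> hle H b a"
    and max: "\<forall>a\<in>carrier H. \<forall>b\<in>carrier H. sadd H a b = (if hle H a b then b else a)"
    using assms unfolding tropical_halo_def by blast+
  have "is_comm_semiring H"
    using halo unfolding is_halo_def by blast
  then have "is_comm_semiring (semiring_str.truncate H)"
    unfolding is_comm_semiring_def truncate_simps .
  moreover have "\<forall>a\<in>carrier H. sadd H a a = a"
    using max by simp
  moreover have "\<forall>a\<in>carrier H. \<forall>b\<in>carrier H. nat_le H a b \<or> nat_le H b a"
    using total tropical_halo_nat_le_iff [OF assms] by blast
  ultimately show ?thesis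
    using nontrivial unfolding idem_total_semiring_def idempotent_semiring_def truncate_simps
    by blast
qed

lemma mult_halo_hom_id_truncate:
  assumes "tropical_halo H"
  shows "mult_halo_hom (to_halo (semiring_str.truncate H)) H id"
    and "mult_halo_hom H (to_halo (semiring_str.truncate H)) id"
proof -
  have halo: "is_halo H"
    using assms unfolding tropical_halo_def by (elim conjE)
  then have refl: "\<forall>a\<in>carrier H. hle H a a"
    unfolding is_halo_def by (elim conjE)
  have "is_comm_semiring H"
    using halo unfolding is_halo_def by (elim conjE)
  then have closed: "\<forall>a\<in>carrier H. \<forall>b\<in>carrier H. sadd H a b \<in> carrier H \<and> smul H a b \<in> carrier H"
    unfolding is_comm_semiring_def by (elim conjE)
  show "mult_halo_hom (to_halo (semiring_str.truncate H)) H id"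
    and "mult_halo_hom H (to_halo (semiring_str.truncate H)) id"
    unfolding mult_halo_hom_def halo_hom_def to_halo_simps truncate_simps id_apply
    using refl closed by (auto simp: tropical_halo_nat_le_iff [OF assms])
qed

theorem lemma1p21:
  shows "(\<forall>R :: 'a semiring_str. idem_total_semiring R \<longrightarrow> tropical_halo (to_halo R))
    \<and> (\<forall>(R :: 'a semiring_str) (S :: 'b semiring_str) f.
          idem_total_semiring R \<longrightarrow> idem_total_semiring S \<longrightarrow>
          (semiring_hom R S f \<longleftrightarrow> mult_halo_hom (to_halo R) (to_halo S) f))
    \<and> (\<forall>H :: 'c halo_str. tropical_halo H \<longrightarrow>
          (\<exists>R :: 'c semiring_str. idem_total_semiring R \<and>
             (\<exists>f g. mult_halo_hom (to_halo R) H f \<and> mult_halo_hom H (to_halo R) g \<and>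
                    (\<forall>x\<in>carrier R. g (f x) = x) \<and> (\<forall>y\<in>carrier H. f (g y) = y))))"
proof (intro conjI allI impI)
  show "tropical_halo (to_halo R)" if "idem_total_semiring R" for R :: "'a semiring_str"
    using that by (rule tropical_halo_to_halo)
  show "semiring_hom R S f \<longleftrightarrow> mult_halo_hom (to_halo R) (to_halo S) f"
    if "idem_total_semiring R" "idem_total_semiring S"
    for R :: "'a semiring_str" and S :: "'b semiring_str" and f
    using that by (simp add: idem_total_semiring_def idem_semiring_hom_iff_mult_halo_hom)
  fix H :: "'c halo_str"
  assume H: "tropical_halo H"
  show "\<exists>R :: 'c semiring_str. idem_total_semiring R \<and>
      (\<exists>f g. mult_halo_hom (to_halo R) H f \<and> mult_halo_hom H (to_halo R) g \<and>
             (\<forall>x\<in>carrier R. g (f x) = x) \<and> (\<forall>y\<in>carrier H. f (g y) = y))"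
    using idem_total_semiring_truncate [OF H] mult_halo_hom_id_truncate [OF H]
    by (intro exI [of _ "semiring_str.truncate H"] conjI exI [of _ id]) simp_all
qed

end
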